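(* For $n>2$, the polytope $P(D_n)$ has a regular triangulation all of whose maximal simplices are unimodular with respect to the affine lattice spanned by the vertices of $P(D_n)$.
   Context: Each $g\in S_n$ is identified with its $n\times n$ permutation matrix (entry $(i,j)$ is $1$ iff $g(i)=j$); $P(G)=\mathrm{conv}\{g:g\in G\}$. $D_n\le S_n$ is generated by $r=(1\ 2\ \cdots\ n)$ and $f=(1\ n)(2\ n-1)\cdots(\lfloor\frac{n+1}{2}\rfloor\ \lceil\frac{n+1}{2}\rceil)$. A simplex with vertices $w_1,\dots,w_m$ in an affine lattice $L$ is unimodular in $L$ if $\{w_m-w_1,\dots,w_2-w_1\}$ is a basis of (the linear lattice underlying) $L$. *)

theory Defs
  imports "HOL-Analysis.Analysis"
begin

(* Permutations of {1..n} are functions nat => nat that are the identity outside {1..n}. *)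

definition dn_rot :: "nat \<Rightarrow> nat \<Rightarrow> nat" where
  "dn_rot n i = (if 1 \<le> i \<and> i < n then i + 1 else if i = n then 1 else i)"

definition dn_flip :: "nat \<Rightarrow> nat \<Rightarrow> nat" where
  "dn_flip n i = (if 1 \<le> i \<and> i \<le> n then n + 1 - i else i)"

(* D_n: the subgroup of S_n generated by r and f (finite group, so the
   generated submonoid equals the generated subgroup) *)
inductive_set dihedral :: "nat \<Rightarrow> (nat \<Rightarrow> nat) set" for n :: nat where
  dihedral_id: "id \<in> dihedral n"
| dihedral_rot: "g \<in> dihedral n \<Longrightarrow> dn_rot n \<circ> g \<in> dihedral n"
| dihedral_flip: "g \<in> dihedral n \<Longrightarrow> dn_flip n \<circ> g \<in> dihedral n"

(* Permutation matrix of g, with rows/columns indexed by the finite type 'n,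
   identified with {1..n} via the bijection e :: nat => 'n.
   Entry (i,j) is 1 iff g(i) = j. *)
definition perm_mat :: "(nat \<Rightarrow> 'n::finite) \<Rightarrow> (nat \<Rightarrow> nat) \<Rightarrow> real ^ 'n ^ 'n" where
  "perm_mat e g = (\<chi> a b. if g (inv_into {1..CARD('n)} e a) = inv_into {1..CARD('n)} e b
                           then 1 else 0)"

definition dn_vertices :: "(nat \<Rightarrow> 'n::finite) \<Rightarrow> (real ^ 'n ^ 'n) set" where
  "dn_vertices e = perm_mat e ` dihedral CARD('n)"

definition aff_lattice :: "'a::real_vector set \<Rightarrow> 'a set" where
  "aff_lattice V = {(\<Sum>v\<in>V. c v *\<^sub>R v) | c. (\<forall>v\<in>V. c v \<in> \<int>) \<and> (\<Sum>v\<in>V. c v) = 1}"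

definition lin_part :: "'a::real_vector set \<Rightarrow> 'a set" where
  "lin_part L = {x - y | x y. x \<in> L \<and> y \<in> L}"

definition is_Z_basis :: "'a::real_vector set \<Rightarrow> 'a set \<Rightarrow> bool" where
  "is_Z_basis B M \<longleftrightarrow> finite B \<and>
     M = {(\<Sum>b\<in>B. c b *\<^sub>R b) | c. \<forall>b\<in>B. c b \<in> \<int>} \<and>
     (\<forall>c. (\<forall>b\<in>B. c b \<in> \<int>) \<and> (\<Sum>b\<in>B. c b *\<^sub>R b) = 0 \<longrightarrow> (\<forall>b\<in>B. c b = 0))"

definition unimodular_in :: "'a::real_vector set \<Rightarrow> 'a set \<Rightarrow> bool" where
  "unimodular_in L S \<longleftrightarrow> finite S \<and> S \<subseteq> L \<and>
     (\<exists>w\<in>S. is_Z_basis ((\<lambda>v. v - w) ` (S - {w})) (lin_part L))"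

(* T is a regular triangulation of conv V (with vertices in V), given by its
   maximal (full-dimensional) simplices, each represented by its vertex set *)
definition regular_triangulation :: "'a::euclidean_space set \<Rightarrow> 'a set set \<Rightarrow> bool" where
  "regular_triangulation V T \<longleftrightarrow>
     finite T \<and>
     (\<forall>S\<in>T. S \<subseteq> V \<and> \<not> affine_dependent S \<and>
              aff_dim (convex hull S) = aff_dim (convex hull V)) \<and>
     \<Union>((\<lambda>S. convex hull S) ` T) = convex hull V \<and>
     (\<forall>S\<in>T. \<forall>S'\<in>T. convex hull S \<inter> convex hull S' = convex hull (S \<inter> S')) \<and>
     (\<exists>\<omega> :: 'a \<Rightarrow> real. \<forall>S\<in>T. \<exists>a b. (\<forall>v\<in>S. a \<bullet> v + b = \<omega> v) \<and>
                                     (\<forall>v\<in>V - S. a \<bullet> v + b < \<omega> v))"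

end

theory Submission
  imports Defs
begin

text \<open>
  Write the vertices of P(D_n) as the rotation matrices R(k) and the reflection matrices F(m),
  k, m in Z/n. Entry (i, j) of a linear relation between them reads c(R(j - i)) + c(F(j + i)) = 0,
  and (j - i, j + i) runs through all pairs (k, m) with k = m modulo gcd(2, n). So the
  relations are spanned by "sum of the R(k) = sum of the F(m)", one for each class of k, m modulo
  gcd(2, n), and paired classes have equal size.

  For such a configuration, deleting one rotation g(s) from every class leaves a linearly
  independent set with the same affine span, and g(s) = sum of the F(m) minus sum of the other
  R(k) of its class is an integer affine combination of what remains: the simplex is unimodular.
  With rotations at height 1 and reflections at height 0 each such simplex is a lower facet of
  the lifted polytope, since g(s) lies strictly above the lifted hyperplane. Shifting barycentric
  weights along the class relations shows that these simplices cover P(D_n) and meet in common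
  faces.
\<close>

section \<open>Integer spans and affine lattices\<close>

lemma sum_of_bool_mem_scaleR:
  fixes f :: "'a \<Rightarrow> 'b::real_vector"
  assumes "finite V" "X \<subseteq> V"
  shows "(\<Sum>v\<in>V. of_bool (v \<in> X) *\<^sub>R f v) = sum f X"
proof -
  have "(\<Sum>v\<in>V. of_bool (v \<in> X) *\<^sub>R f v) = (\<Sum>v\<in>V. if v \<in> X then f v else 0)"
    by (rule sum.cong) auto
  also have "\<dots> = sum f X"
    using assms sum.inter_restrict[OF assms(1), of f X] by (simp add: Int_absorb1)
  finally show ?thesis .
qed

definition int_span :: "'a::real_vector set \<Rightarrow> 'a set" where
  "int_span X = {(\<Sum>b\<in>X. c b *\<^sub>R b) | c. \<forall>b\<in>X. c b \<in> \<int>}"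

lemma int_span_zero: "0 \<in> int_span X"
  unfolding int_span_def by (auto intro!: exI[of _ "\<lambda>_. 0"])

lemma int_span_add:
  assumes "x \<in> int_span X" "y \<in> int_span X"
  shows "x + y \<in> int_span X"
proof -
  obtain c d where "x = (\<Sum>b\<in>X. c b *\<^sub>R b)" "y = (\<Sum>b\<in>X. d b *\<^sub>R b)" "\<forall>b\<in>X. c b \<in> \<int> \<and> d b \<in> \<int>"
    using assms unfolding int_span_def by blast
  then show ?thesis
    unfolding int_span_def by (auto intro!: exI[of _ "\<lambda>b. c b + d b"] simp: scaleR_add_left sum.distrib)
qed

lemma int_span_scaleR:
  assumes "t \<in> \<int>" "x \<in> int_span X"
  shows "t *\<^sub>R x \<in> int_span X"
proof -
  obtain c where "x = (\<Sum>b\<in>X. c b *\<^sub>R b)" "\<forall>b\<in>X. c b \<in> \<int>"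
    using assms unfolding int_span_def by blast
  then show ?thesis
    using assms(1) unfolding int_span_def by (auto intro!: exI[of _ "\<lambda>b. t * c b"] simp: scaleR_sum_right)
qed

lemma int_span_sum:
  "finite J \<Longrightarrow> (\<And>j. j \<in> J \<Longrightarrow> t j \<in> \<int> \<and> f j \<in> int_span X) \<Longrightarrow>
    (\<Sum>j\<in>J. t j *\<^sub>R f j) \<in> int_span X"
  by (induction J rule: finite_induct) (auto intro!: int_span_add int_span_scaleR int_span_zero)

lemma int_span_superset: "finite X \<Longrightarrow> X \<subseteq> int_span X"
proof
  fix b assume "finite X" "b \<in> X"
  then have "(\<Sum>x\<in>X. of_bool (x \<in> {b}) *\<^sub>R x) = b"
    using sum_of_bool_mem_scaleR[of X "{b}" "\<lambda>x. x"] by simp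
  then show "b \<in> int_span X"
    unfolding int_span_def by (auto intro!: exI[of _ "\<lambda>x. of_bool (x \<in> {b})"])
qed

lemma int_span_subset: "finite Y \<Longrightarrow> Y \<subseteq> int_span X \<Longrightarrow> int_span Y \<subseteq> int_span X"
  unfolding int_span_def[of Y] by (auto intro!: int_span_sum)

lemma int_span_mono: "finite Y \<Longrightarrow> X \<subseteq> Y \<Longrightarrow> int_span X \<subseteq> int_span Y"
  using int_span_subset int_span_superset by (metis finite_subset order_trans)

lemma int_span_translate:
  assumes "finite V"
  shows "int_span ((\<lambda>v. v - w) ` V) = {(\<Sum>v\<in>V. t v *\<^sub>R (v - w)) | t. \<forall>v\<in>V. t v \<in> \<int>}"
proof -
  have inj: "inj_on (\<lambda>v. v - w) V" by (rule inj_onI) simp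
  show ?thesis
  proof (intro equalityI subsetI)
    fix z assume "z \<in> int_span ((\<lambda>v. v - w) ` V)"
    then obtain c where "z = (\<Sum>v\<in>V. c (v - w) *\<^sub>R (v - w))" "\<forall>v\<in>V. c (v - w) \<in> \<int>"
      unfolding int_span_def sum.reindex[OF inj] by auto
    then show "z \<in> {(\<Sum>v\<in>V. t v *\<^sub>R (v - w)) | t. \<forall>v\<in>V. t v \<in> \<int>}"
      by (intro CollectI exI[of _ "\<lambda>v. c (v - w)"]) simp
  next
    fix z assume "z \<in> {(\<Sum>v\<in>V. t v *\<^sub>R (v - w)) | t. \<forall>v\<in>V. t v \<in> \<int>}"
    then obtain t where "z = (\<Sum>v\<in>V. t v *\<^sub>R (v - w))" "\<forall>v\<in>V. t v \<in> \<int>" by blast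
    then show "z \<in> int_span ((\<lambda>v. v - w) ` V)"
      unfolding int_span_def sum.reindex[OF inj] by (auto intro!: exI[of _ "\<lambda>b. t (b + w)"])
  qed
qed

lemma is_Z_basis_int_span:
  assumes "finite B" "independent B"
  shows "is_Z_basis B (int_span B)"
  using assms unfolding is_Z_basis_def int_span_def by (auto simp: dependent_finite)

lemma aff_lattice_translate:
  assumes "finite V" "w \<in> V" "\<forall>v\<in>V. t v \<in> \<int>"
  shows "w + (\<Sum>v\<in>V. t v *\<^sub>R (v - w)) \<in> aff_lattice V"
proof -
  define c where "c v = t v + (if v = w then 1 - sum t V else 0)" for v
  have delta: "(\<Sum>v\<in>V. (if v = w then a else 0) *\<^sub>R v) = a *\<^sub>R w" for a
    using assms(1,2) by (simp add: if_distrib[of "\<lambda>x. x *\<^sub>R _"] sum.delta cong: if_cong)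
  have "(\<Sum>v\<in>V. c v *\<^sub>R v) = (\<Sum>v\<in>V. t v *\<^sub>R v) + (1 - sum t V) *\<^sub>R w"
    using delta by (simp add: c_def scaleR_add_left sum.distrib)
  also have "\<dots> = w + (\<Sum>v\<in>V. t v *\<^sub>R (v - w))"
    by (simp add: scaleR_diff_right scaleR_diff_left sum_subtractf scaleR_sum_left)
  finally have "(\<Sum>v\<in>V. c v *\<^sub>R v) = w + (\<Sum>v\<in>V. t v *\<^sub>R (v - w))" .
  moreover have "sum c V = 1"
    using assms by (simp add: c_def sum.distrib sum.delta)
  moreover have "\<forall>v\<in>V. c v \<in> \<int>"
    using assms by (simp add: c_def Ints_sum)
  ultimately show ?thesis
    unfolding aff_lattice_def by (intro CollectI exI[of _ c]) auto
qed

lemma aff_lattice_superset: "finite V \<Longrightarrow> V \<subseteq> aff_lattice V"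
  using aff_lattice_translate[of V _ "\<lambda>_. 0"] by auto

lemma lin_part_aff_lattice:
  assumes "finite V" "w \<in> V"
  shows "lin_part (aff_lattice V) = int_span ((\<lambda>v. v - w) ` V)"
proof
  show "lin_part (aff_lattice V) \<subseteq> int_span ((\<lambda>v. v - w) ` V)"
  proof
    fix z assume "z \<in> lin_part (aff_lattice V)"
    then obtain cx cy where z: "z = (\<Sum>v\<in>V. cx v *\<^sub>R v) - (\<Sum>v\<in>V. cy v *\<^sub>R v)"
      and c: "\<forall>v\<in>V. cx v \<in> \<int> \<and> cy v \<in> \<int>" "sum cx V = 1" "sum cy V = 1"
      unfolding lin_part_def aff_lattice_def by blast
    have "z = (\<Sum>v\<in>V. (cx v - cy v) *\<^sub>R (v - w))"
      using c by (simp add: z scaleR_diff_left scaleR_diff_right sum_subtractf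
          flip: scaleR_sum_left)
    then show "z \<in> int_span ((\<lambda>v. v - w) ` V)"
      unfolding int_span_translate[OF assms(1)] using c by auto
  qed
  show "int_span ((\<lambda>v. v - w) ` V) \<subseteq> lin_part (aff_lattice V)"
  proof
    fix z assume "z \<in> int_span ((\<lambda>v. v - w) ` V)"
    then obtain t where "z = (\<Sum>v\<in>V. t v *\<^sub>R (v - w))" "\<forall>v\<in>V. t v \<in> \<int>"
      unfolding int_span_translate[OF assms(1)] by blast
    then have "w + z \<in> aff_lattice V"
      using aff_lattice_translate[OF assms] by simp
    moreover have "w \<in> aff_lattice V"
      using aff_lattice_superset assms by blast
    moreover have "z = (w + z) - w" by simp
    ultimately show "z \<in> lin_part (aff_lattice V)"
      unfolding lin_part_def by blast
  qed
qed

lemma convex_hull_subset_iff_weights: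
  assumes "finite V" "S \<subseteq> V"
  shows "x \<in> convex hull S \<longleftrightarrow>
    (\<exists>u. (\<forall>v\<in>V. 0 \<le> u v) \<and> (\<forall>v\<in>V - S. u v = 0) \<and> sum u V = 1 \<and> (\<Sum>v\<in>V. u v *\<^sub>R v) = x)"
    (is "_ \<longleftrightarrow> (\<exists>u. ?weights u)")
proof -
  have fin: "finite S" using assms finite_subset by blast
  have restrict: "sum u V = sum u S" "(\<Sum>v\<in>V. u v *\<^sub>R v) = (\<Sum>v\<in>S. u v *\<^sub>R v)"
    if "\<forall>v\<in>V - S. u v = 0" for u
    using that assms by (auto intro: sum.mono_neutral_right)
  show ?thesis
  proof
    assume "x \<in> convex hull S"
    then obtain u where u: "\<forall>v\<in>S. 0 \<le> u v" "sum u S = 1" "(\<Sum>v\<in>S. u v *\<^sub>R v) = x"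
      using convex_hull_finite[OF fin] by blast
    define u' where "u' v = (if v \<in> S then u v else 0)" for v
    have off: "\<forall>v\<in>V - S. u' v = 0" by (simp add: u'_def)
    have "sum u' S = 1" "(\<Sum>v\<in>S. u' v *\<^sub>R v) = x" "\<forall>v\<in>V. 0 \<le> u' v"
      using u by (simp_all add: u'_def)
    then have "?weights u'" using off restrict[OF off] by simp
    then show "\<exists>u. ?weights u" by blast
  next
    assume "\<exists>u. ?weights u"
    then obtain u where "?weights u" ..
    then show "x \<in> convex hull S"
      using restrict[of u] assms(2) unfolding convex_hull_finite[OF fin] by auto
  qed
qed

section \<open>Triangulating a balanced configuration\<close>

text \<open>
  \<open>V\<close> is split into pairs of classes \<open>A i\<close>, \<open>B i\<close> of equal size and equal sum, and
  \<open>relation_A_B\<close> says that these class relations span all linear relations among \<open>V\<close>.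
\<close>

locale balanced_partition =
  fixes V :: "'a::euclidean_space set" and I :: "'i set" and A B :: "'i \<Rightarrow> 'a set"
  assumes finite_V: "finite V" and finite_I: "finite I" and I_nonempty: "I \<noteq> {}"
    and V_eq: "V = (\<Union>i\<in>I. A i \<union> B i)"
    and disjoint_A_B: "\<And>i j. i \<in> I \<Longrightarrow> j \<in> I \<Longrightarrow> A i \<inter> B j = {}"
    and disjoint_A: "\<And>i j. i \<in> I \<Longrightarrow> j \<in> I \<Longrightarrow> i \<noteq> j \<Longrightarrow> A i \<inter> A j = {}"
    and disjoint_B: "\<And>i j. i \<in> I \<Longrightarrow> j \<in> I \<Longrightarrow> i \<noteq> j \<Longrightarrow> B i \<inter> B j = {}"
    and card_A_B: "\<And>i. i \<in> I \<Longrightarrow> card (A i) = card (B i)"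
    and A_nonempty: "\<And>i. i \<in> I \<Longrightarrow> A i \<noteq> {}"
    and sum_A_B: "\<And>i. i \<in> I \<Longrightarrow> \<Sum>(A i) = \<Sum>(B i)"
    and relation_A_B: "\<And>c i a b. (\<Sum>v\<in>V. c v *\<^sub>R v) = 0 \<Longrightarrow> i \<in> I \<Longrightarrow> a \<in> A i \<Longrightarrow> b \<in> B i
      \<Longrightarrow> c b = - c a"
begin

lemma A_subset: "i \<in> I \<Longrightarrow> A i \<subseteq> V" and B_subset: "i \<in> I \<Longrightarrow> B i \<subseteq> V"
  by (simp_all only: V_eq) blast+

lemma finite_A: "i \<in> I \<Longrightarrow> finite (A i)"
  by (rule finite_subset[OF A_subset finite_V])

lemma B_nonempty:
  assumes "i \<in> I"
  shows "B i \<noteq> {}"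
proof
  assume "B i = {}"
  then have "card (A i) = 0" using card_A_B[OF assms] by simp
  then show False using finite_A[OF assms] A_nonempty[OF assms] by simp
qed

lemma relation_const_A:
  assumes "(\<Sum>v\<in>V. c v *\<^sub>R v) = 0" "i \<in> I" "a \<in> A i" "a' \<in> A i"
  shows "c a = c a'"
proof -
  obtain b where "b \<in> B i" using B_nonempty[OF assms(2)] by blast
  then show ?thesis using relation_A_B[OF assms(1,2)] assms(3,4) by (metis neg_equal_iff_equal)
qed

definition selector :: "('i \<Rightarrow> 'a) \<Rightarrow> bool" where
  "selector g \<longleftrightarrow> (\<forall>i\<in>I. g i \<in> A i)"

definition simplex_of :: "('i \<Rightarrow> 'a) \<Rightarrow> 'a set" where
  "simplex_of g = V - g ` I"

lemma selector_mem: "selector g \<Longrightarrow> i \<in> I \<Longrightarrow> g i \<in> A i"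
  unfolding selector_def by blast

lemma simplex_subset: "simplex_of g \<subseteq> V"
  unfolding simplex_of_def by blast

lemma finite_simplex: "finite (simplex_of g)"
  using finite_subset[OF simplex_subset finite_V] .

lemma selected_notin_simplex: "i \<in> I \<Longrightarrow> g i \<notin> simplex_of g"
  unfolding simplex_of_def by blast

lemma B_subset_simplex: "selector g \<Longrightarrow> i \<in> I \<Longrightarrow> B i \<subseteq> simplex_of g"
  unfolding selector_def simplex_of_def using B_subset disjoint_A_B by blast

lemma A_minus_subset_simplex: "selector g \<Longrightarrow> i \<in> I \<Longrightarrow> A i - {g i} \<subseteq> simplex_of g"
  unfolding selector_def simplex_of_def using A_subset disjoint_A by blast

lemma relation_vanishing_at_selector:
  assumes "selector g" "(\<Sum>v\<in>V. c v *\<^sub>R v) = 0" "\<forall>i\<in>I. c (g i) = 0" "v \<in> V"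
  shows "c v = 0"
  using \<open>v \<in> V\<close> unfolding V_eq
proof (elim UN_E UnE)
  fix i assume i: "i \<in> I" and "v \<in> A i"
  then show "c v = 0"
    using assms(3) relation_const_A[OF assms(2) i] selector_mem[OF assms(1) i] by metis
next
  fix i assume i: "i \<in> I" and "v \<in> B i"
  then show "c v = 0"
    using assms(3) relation_A_B[OF assms(2) i] selector_mem[OF assms(1) i] by fastforce
qed

lemma independent_simplex:
  assumes "selector g"
  shows "independent (simplex_of g)"
proof
  assume "dependent (simplex_of g)"
  then obtain u v0 where v0: "v0 \<in> simplex_of g" "u v0 \<noteq> 0"
    and rel: "(\<Sum>v\<in>simplex_of g. u v *\<^sub>R v) = 0"
    using dependent_finite[OF finite_simplex] by blast
  define c where "c v = (if v \<in> simplex_of g then u v else 0)" for v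
  have "(\<Sum>v\<in>V. c v *\<^sub>R v) = (\<Sum>v\<in>simplex_of g. u v *\<^sub>R v)"
    unfolding c_def by (rule sum.mono_neutral_cong_right[OF finite_V simplex_subset]) auto
  then have "(\<Sum>v\<in>V. c v *\<^sub>R v) = 0" using rel by simp
  moreover have "\<forall>i\<in>I. c (g i) = 0"
    using selected_notin_simplex by (simp add: c_def)
  ultimately have "c v0 = 0"
    using relation_vanishing_at_selector[OF assms] v0 simplex_subset by blast
  then show False using v0 by (simp add: c_def)
qed

definition selected_coeff :: "('i \<Rightarrow> 'a) \<Rightarrow> 'i \<Rightarrow> 'a \<Rightarrow> real" where
  "selected_coeff g i v = of_bool (v \<in> B i) - of_bool (v \<in> A i - {g i})"

lemma sum_selected_coeff:
  assumes "selector g" "i \<in> I"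
  shows "sum (selected_coeff g i) (simplex_of g) = 1"
proof -
  have "card (A i - {g i}) + 1 = card (B i)"
    using card_A_B[OF assms(2)] finite_A[OF assms(2)] selector_mem[OF assms]
    by (simp add: card_Diff_singleton) (metis Suc_pred card_gt_0_iff empty_iff)
  moreover have "(\<Sum>v\<in>simplex_of g. of_bool (v \<in> X)) = real (card X)" if "X \<subseteq> simplex_of g" for X
    using sum_of_bool_mem_scaleR[OF finite_simplex that, of "\<lambda>_. 1::real"] by simp
  ultimately show ?thesis
    using B_subset_simplex[OF assms] A_minus_subset_simplex[OF assms]
    unfolding selected_coeff_def sum_subtractf by (metis add_diff_cancel_left' add.commute of_nat_add of_nat_1)
qed

lemma selected_coeff_combination:
  assumes "selector g" "i \<in> I"
  shows "(\<Sum>v\<in>simplex_of g. selected_coeff g i v *\<^sub>R v) = g i"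
proof -
  have "g i = \<Sum>(B i) - \<Sum>(A i - {g i})"
    using sum_A_B[OF assms(2)] sum.remove[OF finite_A[OF assms(2)] selector_mem[OF assms], of "\<lambda>v. v"]
    by (simp add: eq_diff_eq)
  then show ?thesis
    unfolding selected_coeff_def scaleR_diff_left sum_subtractf
    using sum_of_bool_mem_scaleR[OF finite_simplex B_subset_simplex[OF assms], of "\<lambda>v. v"]
      sum_of_bool_mem_scaleR[OF finite_simplex A_minus_subset_simplex[OF assms], of "\<lambda>v. v"]
    by simp
qed

lemma affine_hull_simplex:
  assumes "selector g"
  shows "affine hull (simplex_of g) = affine hull V"
proof
  show "affine hull simplex_of g \<subseteq> affine hull V" by (rule hull_mono[OF simplex_subset])
  have "v \<in> affine hull simplex_of g" if v: "v \<in> V" for v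
  proof (cases "v \<in> simplex_of g")
    case True then show ?thesis by (rule hull_inc)
  next
    case False
    then obtain i where "i \<in> I" "v = g i" using v unfolding simplex_of_def by blast
    then show ?thesis
      using sum_selected_coeff[OF assms] selected_coeff_combination[OF assms]
      unfolding affine_hull_finite[OF finite_simplex] by blast
  qed
  then show "affine hull V \<subseteq> affine hull simplex_of g"
    by (intro hull_minimal) (auto intro: affine_affine_hull)
qed

definition class_shift :: "('i \<Rightarrow> real) \<Rightarrow> 'a \<Rightarrow> real" where
  "class_shift t v = (\<Sum>i\<in>I. t i * (of_bool (v \<in> A i) - of_bool (v \<in> B i)))"

lemma class_shift_A:
  assumes "j \<in> I" "v \<in> A j"
  shows "class_shift t v = t j"
proof -
  have "of_bool (v \<in> A i) - of_bool (v \<in> B i) = (of_bool (i = j) :: real)" if "i \<in> I" for i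
  proof -
    have "v \<notin> B i" using disjoint_A_B[OF assms(1) that] assms(2) by blast
    moreover have "v \<in> A i \<longleftrightarrow> i = j" using disjoint_A[OF that assms(1)] assms(2) by blast
    ultimately show ?thesis by simp
  qed
  then have "class_shift t v = (\<Sum>i\<in>I. (if i = j then t i else 0))"
    unfolding class_shift_def by (intro sum.cong) auto
  then show ?thesis using assms(1) finite_I by (simp add: sum.delta')
qed

lemma class_shift_B:
  assumes "j \<in> I" "v \<in> B j"
  shows "class_shift t v = - t j"
proof -
  have "of_bool (v \<in> A i) - of_bool (v \<in> B i) = - (of_bool (i = j) :: real)" if "i \<in> I" for i
  proof -
    have "v \<notin> A i" using disjoint_A_B[OF that assms(1)] assms(2) by blast
    moreover have "v \<in> B i \<longleftrightarrow> i = j" using disjoint_B[OF that assms(1)] assms(2) by blast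
    ultimately show ?thesis by simp
  qed
  then have "class_shift t v = (\<Sum>i\<in>I. - (if i = j then t i else 0))"
    unfolding class_shift_def by (intro sum.cong) auto
  then show ?thesis using assms(1) finite_I by (simp add: sum_negf sum.delta')
qed

lemma sum_class_shift: "sum (class_shift t) V = 0"
proof -
  have "(\<Sum>v\<in>V. of_bool (v \<in> A i) - of_bool (v \<in> B i)) = (0::real)" if "i \<in> I" for i
    using sum_of_bool_mem_scaleR[OF finite_V A_subset[OF that], of "\<lambda>_. 1::real"]
      sum_of_bool_mem_scaleR[OF finite_V B_subset[OF that], of "\<lambda>_. 1::real"] card_A_B[OF that]
    by (simp add: sum_subtractf)
  moreover have "sum (class_shift t) V = (\<Sum>i\<in>I. t i * (\<Sum>v\<in>V. of_bool (v \<in> A i) - of_bool (v \<in> B i)))"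
    unfolding class_shift_def sum_distrib_left by (rule sum.swap)
  ultimately show ?thesis by simp
qed

lemma sum_class_shift_scaleR: "(\<Sum>v\<in>V. class_shift t v *\<^sub>R v) = 0"
proof -
  have "(\<Sum>v\<in>V. (of_bool (v \<in> A i) - of_bool (v \<in> B i)) *\<^sub>R v) = 0" if "i \<in> I" for i
    using sum_of_bool_mem_scaleR[OF finite_V A_subset[OF that], of "\<lambda>v. v"]
      sum_of_bool_mem_scaleR[OF finite_V B_subset[OF that], of "\<lambda>v. v"] sum_A_B[OF that]
    by (simp add: scaleR_diff_left sum_subtractf)
  moreover have "(\<Sum>v\<in>V. class_shift t v *\<^sub>R v)
      = (\<Sum>i\<in>I. t i *\<^sub>R (\<Sum>v\<in>V. (of_bool (v \<in> A i) - of_bool (v \<in> B i)) *\<^sub>R v))"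
    unfolding class_shift_def scaleR_sum_left scaleR_sum_right scaleR_scaleR by (rule sum.swap)
  ultimately show ?thesis by simp
qed

lemma convex_hull_covered:
  assumes "x \<in> convex hull V"
  obtains g where "selector g" "x \<in> convex hull (simplex_of g)"
proof -
  obtain u where u: "\<forall>v\<in>V. 0 \<le> u v" "sum u V = 1" "(\<Sum>v\<in>V. u v *\<^sub>R v) = x"
    using assms convex_hull_subset_iff_weights[OF finite_V order_refl] by blast
  define g where "g i = arg_min_on u (A i)" for i
  have g: "g i \<in> A i" "\<forall>a\<in>A i. u (g i) \<le> u a" if "i \<in> I" for i
    using arg_min_if_finite[OF finite_A[OF that] A_nonempty[OF that], of u]
    unfolding g_def by (auto simp: not_less)
  then have sel: "selector g" unfolding selector_def by blast
  \<comment> \<open>subtract \<open>u (g i)\<close> times the \<open>i\<close>-th class relation; minimality keeps the weights \<open>\<ge> 0\<close>\<close>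
  define u' where "u' v = u v - class_shift (\<lambda>i. u (g i)) v" for v
  have "0 \<le> u' v" if "v \<in> V" for v
    using that unfolding V_eq
  proof (elim UN_E UnE)
    fix i assume "i \<in> I" "v \<in> A i"
    then show "0 \<le> u' v" using g unfolding u'_def by (simp add: class_shift_A)
  next
    fix i assume "i \<in> I" "v \<in> B i"
    then show "0 \<le> u' v"
      using g u(1) A_subset B_subset unfolding u'_def by (force simp: class_shift_B)
  qed
  moreover have "u' v = 0" if "v \<in> V - simplex_of g" for v
    using that g class_shift_A unfolding simplex_of_def u'_def by auto
  moreover have "sum u' V = 1" "(\<Sum>v\<in>V. u' v *\<^sub>R v) = x"
    using u sum_class_shift sum_class_shift_scaleR
    by (simp_all add: u'_def sum_subtractf scaleR_diff_left)
  ultimately have "x \<in> convex hull (simplex_of g)"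
    using convex_hull_subset_iff_weights[OF finite_V simplex_subset] by blast
  with sel show ?thesis by (rule that)
qed

lemma convex_hull_simplex_Int:
  assumes "selector g" "selector g'"
  shows "convex hull (simplex_of g) \<inter> convex hull (simplex_of g')
    = convex hull (simplex_of g \<inter> simplex_of g')"
proof (rule antisym)
  have sub: "simplex_of g \<inter> simplex_of g' \<subseteq> V" using simplex_subset by blast
  show "convex hull (simplex_of g) \<inter> convex hull (simplex_of g')
    \<subseteq> convex hull (simplex_of g \<inter> simplex_of g')"
  proof
    fix x assume x: "x \<in> convex hull (simplex_of g) \<inter> convex hull (simplex_of g')"
    obtain u where u: "\<forall>v\<in>V. 0 \<le> u v" "\<forall>v\<in>V - simplex_of g. u v = 0" "sum u V = 1"
      "(\<Sum>v\<in>V. u v *\<^sub>R v) = x"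
      using x convex_hull_subset_iff_weights[OF finite_V simplex_subset] by blast
    obtain u' where u': "\<forall>v\<in>V. 0 \<le> u' v" "\<forall>v\<in>V - simplex_of g'. u' v = 0"
      "(\<Sum>v\<in>V. u' v *\<^sub>R v) = x"
      using x convex_hull_subset_iff_weights[OF finite_V simplex_subset] by blast
    define c where "c v = u v - u' v" for v
    have rel: "(\<Sum>v\<in>V. c v *\<^sub>R v) = 0"
      using u(4) u'(3) by (simp add: c_def scaleR_diff_left sum_subtractf)
    \<comment> \<open>\<open>c\<close> is constant on \<open>A i\<close>, \<open>\<le> 0\<close> at \<open>g i\<close> and \<open>\<ge> 0\<close> at \<open>g' i\<close>\<close>
    have "c (g i) = 0" if i: "i \<in> I" for i
    proof -
      have gi: "g i \<in> A i" "g' i \<in> A i" using selector_mem assms i by blast+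
      then have "c (g i) \<le> 0" "0 \<le> c (g' i)"
        using u u' selected_notin_simplex[OF i] A_subset[OF i] unfolding c_def by auto
      then show ?thesis using relation_const_A[OF rel i gi] by linarith
    qed
    then have "u v = u' v" if "v \<in> V" for v
      using relation_vanishing_at_selector[OF assms(1) rel _ that] unfolding c_def by simp
    then have "u v = 0" if "v \<in> V - (simplex_of g \<inter> simplex_of g')" for v
      using that u(2) u'(2) by (cases "v \<in> simplex_of g") auto
    then show "x \<in> convex hull (simplex_of g \<inter> simplex_of g')"
      unfolding convex_hull_subset_iff_weights[OF finite_V sub] using u by blast
  qed
qed (simp add: hull_mono)

definition height :: "'a \<Rightarrow> real" where
  "height v = of_bool (v \<in> (\<Union>i\<in>I. A i))"

lemma simplex_lifts_to_lower_facet: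
  assumes "selector g"
  obtains a b where "\<forall>v\<in>simplex_of g. a \<bullet> v + b = height v"
    and "\<forall>v\<in>V - simplex_of g. a \<bullet> v + b < height v"
proof -
  obtain h where h: "linear h" "\<forall>v\<in>simplex_of g. h v = height v"
    using linear_independent_extend[OF independent_simplex[OF assms]] by blast
  define a where "a = adjoint h 1"
  have ha: "a \<bullet> x = h x" for x
    using adjoint_works[OF h(1), of x 1] by (simp add: a_def inner_commute)
  have "h v < height v" if v: "v \<in> V - simplex_of g" for v
  proof -
    obtain i where i: "i \<in> I" "v = g i" using v unfolding simplex_of_def by blast
    then have "height v = 1" using selector_mem[OF assms] unfolding height_def by auto
    moreover have "selected_coeff g i w * height w \<le> 0" for w
      using disjoint_A_B[OF _ i(1)] unfolding selected_coeff_def height_def by auto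
    then have "(\<Sum>w\<in>simplex_of g. selected_coeff g i w * height w) \<le> 0"
      by (simp add: sum_nonpos)
    moreover have "h v = h (\<Sum>w\<in>simplex_of g. selected_coeff g i w *\<^sub>R w)"
      using selected_coeff_combination[OF assms i(1)] i(2) by simp
    then have "h v = (\<Sum>w\<in>simplex_of g. selected_coeff g i w * h w)"
      by (simp add: linear_sum[OF h(1)] linear_scale[OF h(1)])
    then have "h v = (\<Sum>w\<in>simplex_of g. selected_coeff g i w * height w)"
      using h(2) by simp
    ultimately show ?thesis by simp
  qed
  then show ?thesis using that[of a 0] h(2) ha by simp
qed

lemma unimodular_simplex:
  assumes "selector g"
  shows "unimodular_in (aff_lattice V) (simplex_of g)"
proof -
  let ?S = "simplex_of g"
  obtain i0 where "i0 \<in> I" using I_nonempty by blast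
  then obtain w where w: "w \<in> ?S" using B_nonempty B_subset_simplex[OF assms] by blast
  define E where "E = (\<lambda>v. v - w) ` (?S - {w})"
  have "finite E" using finite_simplex unfolding E_def by simp
  have edge: "v - w \<in> int_span E" if "v \<in> ?S" for v
    using that int_span_zero int_span_superset[OF \<open>finite E\<close>] unfolding E_def
    by (cases "v = w") auto
  have "v - w \<in> int_span E" if v: "v \<in> V" for v
  proof (cases "v \<in> ?S")
    case False
    then obtain i where i: "i \<in> I" "v = g i" using v unfolding simplex_of_def by blast
    have "v - w = (\<Sum>u\<in>?S. selected_coeff g i u *\<^sub>R (u - w))"
      using selected_coeff_combination[OF assms i(1)] sum_selected_coeff[OF assms i(1)] i(2)
      by (simp add: scaleR_diff_right sum_subtractf flip: scaleR_sum_left)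
    also have "\<dots> \<in> int_span E"
      using edge finite_simplex by (intro int_span_sum) (auto simp: selected_coeff_def)
    finally show ?thesis .
  qed (rule edge)
  then have "lin_part (aff_lattice V) = int_span E"
    using lin_part_aff_lattice[OF finite_V] simplex_subset w \<open>finite E\<close> finite_V
      int_span_subset[of "(\<lambda>v. v - w) ` V" E] int_span_mono[of "(\<lambda>v. v - w) ` V" E]
    unfolding E_def by blast
  moreover have "independent E"
    using independent_simplex[OF assms] affine_dependent_imp_dependent
      affine_dependent_iff_dependent2[OF w] unfolding E_def by auto
  ultimately have "is_Z_basis E (lin_part (aff_lattice V))"
    using is_Z_basis_int_span[OF \<open>finite E\<close>] by simp
  then show ?thesis
    unfolding unimodular_in_def E_def
    using finite_simplex simplex_subset aff_lattice_superset[OF finite_V] w by blast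
qed

lemma Union_convex_hull_simplices:
  "\<Union>((\<lambda>S. convex hull S) ` simplex_of ` Collect selector) = convex hull V"
proof
  show "\<Union>((\<lambda>S. convex hull S) ` simplex_of ` Collect selector) \<subseteq> convex hull V"
    using hull_mono[OF simplex_subset] by blast
  show "convex hull V \<subseteq> \<Union>((\<lambda>S. convex hull S) ` simplex_of ` Collect selector)"
  proof
    fix x assume "x \<in> convex hull V"
    then obtain g where "selector g" "x \<in> convex hull (simplex_of g)"
      by (rule convex_hull_covered)
    then show "x \<in> \<Union>((\<lambda>S. convex hull S) ` simplex_of ` Collect selector)" by blast
  qed
qed

theorem regular_unimodular_triangulation:
  "\<exists>T. regular_triangulation V T \<and> (\<forall>S\<in>T. unimodular_in (aff_lattice V) S)"
proof (intro exI conjI)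
  let ?T = "simplex_of ` Collect selector"
  show "\<forall>S\<in>?T. unimodular_in (aff_lattice V) S" using unimodular_simplex by auto
  have finite: "finite ?T" by (rule finite_subset[of _ "Pow V"]) (use simplex_subset finite_V in auto)
  have dim: "aff_dim (convex hull S) = aff_dim (convex hull V)" if "S \<in> ?T" for S
    using that affine_hull_simplex aff_dim_affine_hull aff_dim_convex_hull by (metis image_iff mem_Collect_eq)
  have cover: "\<Union>((\<lambda>S. convex hull S) ` ?T) = convex hull V"
    by (rule Union_convex_hull_simplices)
  have subset: "S \<subseteq> V" if "S \<in> ?T" for S
    using that simplex_subset by blast
  have indep: "\<not> affine_dependent S" if "S \<in> ?T" for S
    using that independent_simplex affine_dependent_imp_dependent by blast
  have inter: "convex hull S \<inter> convex hull S' = convex hull (S \<inter> S')" if "S \<in> ?T" "S' \<in> ?T" for S S'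
    using that convex_hull_simplex_Int by blast
  have lift: "\<exists>a b. (\<forall>v\<in>S. a \<bullet> v + b = height v) \<and> (\<forall>v\<in>V - S. a \<bullet> v + b < height v)"
    if "S \<in> ?T" for S
  proof -
    obtain g where "selector g" "S = simplex_of g" using \<open>S \<in> ?T\<close> by blast
    then show ?thesis using simplex_lifts_to_lower_facet by metis
  qed
  show "regular_triangulation V ?T"
    unfolding regular_triangulation_def
    using finite subset indep dim cover inter by (intro conjI ballI exI[of _ height] lift) auto
qed

end

section \<open>The dihedral group as affine maps of Z/n\<close>

text \<open>
  The map \<open>i \<mapsto> u i + k\<close> on \<open>\<int>/n\<close> with residues represented by \<open>1..n\<close>, and the identity
  elsewhere as for all permutations in \<open>Defs\<close>.
\<close>

definition mod_affine :: "nat \<Rightarrow> int \<Rightarrow> int \<Rightarrow> nat \<Rightarrow> nat" where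
  "mod_affine n u k i = (if 1 \<le> i \<and> i \<le> n then nat ((u * int i + k - 1) mod int n) + 1 else i)"

lemma mod_affine_range:
  assumes "0 < n" "i \<in> {1..n}"
  shows "mod_affine n u k i \<in> {1..n}"
  using assms pos_mod_bound[of "int n" "u * int i + k - 1"] pos_mod_sign[of "int n" "u * int i + k - 1"]
  unfolding mod_affine_def by (auto simp: Suc_le_eq nat_less_iff)

lemma mod_affine_outside: "i \<notin> {1..n} \<Longrightarrow> mod_affine n u k i = i"
  unfolding mod_affine_def by auto

lemma mod_affine_eq_iff:
  assumes "0 < n" "i \<in> {1..n}" "j \<in> {1..n}"
  shows "mod_affine n u k i = j \<longleftrightarrow> int n dvd (u * int i + k - int j)"
proof -
  have "mod_affine n u k i = j \<longleftrightarrow> (u * int i + k - 1) mod int n = (int j - 1) mod int n"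
    using assms by (auto simp: mod_affine_def)
  also have "\<dots> \<longleftrightarrow> int n dvd (u * int i + k - int j)"
    by (simp add: mod_eq_dvd_iff algebra_simps)
  finally show ?thesis .
qed

lemma mod_affine_comp:
  assumes "0 < n"
  shows "mod_affine n u k \<circ> mod_affine n u' k' = mod_affine n (u * u') (u * k' + k)"
proof
  fix i
  show "(mod_affine n u k \<circ> mod_affine n u' k') i = mod_affine n (u * u') (u * k' + k) i"
  proof (cases "i \<in> {1..n}")
    case True
    define j where "j = mod_affine n u' k' i"
    have j: "j \<in> {1..n}" "mod_affine n u k j \<in> {1..n}"
      using mod_affine_range[OF assms] True unfolding j_def by blast+
    let ?l = "int (mod_affine n u k j)"
    have "int n dvd (u' * int i + k' - int j)" "int n dvd (u * int j + k - ?l)"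
      using mod_affine_eq_iff[OF assms] True j unfolding j_def by blast+
    moreover have "u * u' * int i + (u * k' + k) - ?l = (u * int j + k - ?l) + u * (u' * int i + k' - int j)"
      by (simp add: algebra_simps)
    ultimately have "int n dvd (u * u' * int i + (u * k' + k) - ?l)"
      by (metis dvd_add dvd_mult)
    then have "mod_affine n (u * u') (u * k' + k) i = mod_affine n u k j"
      using mod_affine_eq_iff[OF assms True j(2)] by blast
    then show ?thesis by (simp add: j_def)
  qed (simp add: mod_affine_outside)
qed

lemma mod_affine_mod: "mod_affine n u (k mod int n) = mod_affine n u k"
proof -
  have shift: "(a + k mod int n - 1) mod int n = (a + k - 1) mod int n" for a
    using mod_add_right_eq[of "a - 1" k "int n"] by (simp add: algebra_simps)
  show ?thesis unfolding mod_affine_def shift ..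
qed

lemma mod_affine_eqI:
  assumes "0 < n" "\<And>i. i \<in> {1..n} \<Longrightarrow> f i \<in> {1..n} \<and> int n dvd (u * int i + k - int (f i))"
    "\<And>i. i \<notin> {1..n} \<Longrightarrow> f i = i"
  shows "f = mod_affine n u k"
proof
  fix i show "f i = mod_affine n u k i"
    using assms mod_affine_eq_iff[OF assms(1)] mod_affine_outside by (cases "i \<in> {1..n}") metis+
qed

lemma mod_affine_id: "0 < n \<Longrightarrow> id = mod_affine n 1 0"
  by (rule mod_affine_eqI) auto

lemma dn_rot_eq: "0 < n \<Longrightarrow> dn_rot n = mod_affine n 1 1"
  by (rule mod_affine_eqI) (auto simp: dn_rot_def)

lemma dn_flip_eq: "0 < n \<Longrightarrow> dn_flip n = mod_affine n (-1) 1"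
  by (rule mod_affine_eqI) (auto simp: dn_flip_def of_nat_diff)

lemma rotation_in_dihedral:
  assumes "0 < n"
  shows "mod_affine n 1 k \<in> dihedral n"
proof -
  have "mod_affine n 1 (int m) \<in> dihedral n" for m
  proof (induction m)
    case 0
    show ?case using dihedral_id mod_affine_id[OF assms] by (metis of_nat_0)
  next
    case (Suc m)
    then have "dn_rot n \<circ> mod_affine n 1 (int m) \<in> dihedral n" by (rule dihedral_rot)
    then show ?case by (simp add: dn_rot_eq[OF assms] mod_affine_comp[OF assms] add.commute)
  qed
  then have "mod_affine n 1 (int (nat (k mod int n))) \<in> dihedral n" .
  then show ?thesis using assms by (simp add: mod_affine_mod)
qed

lemma dihedral_eq:
  assumes "0 < n"
  shows "dihedral n = (\<lambda>(u, k). mod_affine n u k) ` ({1, -1} \<times> {0..<int n})"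
proof
  have normal_form: "\<exists>u k. u \<in> {1, -1} \<and> g = mod_affine n u k" if "g \<in> dihedral n" for g
    using that
  proof induction
    case dihedral_id
    then show ?case using mod_affine_id[OF assms] by blast
  next
    case (dihedral_rot g)
    then obtain u k where "u \<in> {1, -1}" "g = mod_affine n u k" by blast
    moreover have "dn_rot n \<circ> mod_affine n u k = mod_affine n u (k + 1)"
      using mod_affine_comp[OF assms, of 1 1 u k] by (simp add: dn_rot_eq[OF assms] add.commute)
    ultimately show ?case by blast
  next
    case (dihedral_flip g)
    then obtain u k where "u \<in> {1, -1}" "g = mod_affine n u k" by blast
    moreover have "dn_flip n \<circ> mod_affine n u k = mod_affine n (- u) (1 - k)"
      using mod_affine_comp[OF assms, of "-1" 1 u k] by (simp add: dn_flip_eq[OF assms])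
    moreover have "- u \<in> {1, -1}" using \<open>u \<in> {1, -1}\<close> by auto
    ultimately show ?case by blast
  qed
  show "dihedral n \<subseteq> (\<lambda>(u, k). mod_affine n u k) ` ({1, -1} \<times> {0..<int n})"
  proof
    fix g assume "g \<in> dihedral n"
    then obtain u k where "u \<in> {1, -1}" "g = mod_affine n u (k mod int n)"
      using normal_form by (metis mod_affine_mod)
    moreover have "k mod int n \<in> {0..<int n}" using assms by simp
    ultimately show "g \<in> (\<lambda>(u, k). mod_affine n u k) ` ({1, -1} \<times> {0..<int n})"
      by (intro image_eqI[where x = "(u, k mod int n)"]) simp_all
  qed
  have "mod_affine n (-1) k = dn_flip n \<circ> mod_affine n 1 (1 - k)" for k
    by (simp add: dn_flip_eq[OF assms] mod_affine_comp[OF assms])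
  then have "mod_affine n (-1) k \<in> dihedral n" for k
    using dihedral_flip[OF rotation_in_dihedral[OF assms]] by simp
  then show "(\<lambda>(u, k). mod_affine n u k) ` ({1, -1} \<times> {0..<int n}) \<subseteq> dihedral n"
    using rotation_in_dihedral[OF assms] by auto
qed

section \<open>The vertices of P(D_n)\<close>

lemma perm_mat_entry:
  fixes e :: "nat \<Rightarrow> 'n::finite"
  assumes "bij_betw e {1..CARD('n)} UNIV" "i \<in> {1..CARD('n)}" "j \<in> {1..CARD('n)}"
  shows "perm_mat e g $ e i $ e j = of_bool (g i = j)"
  using assms by (simp add: perm_mat_def bij_betw_inv_into_left)

lemma perm_mat_eq_imp_eq_on:
  fixes e :: "nat \<Rightarrow> 'n::finite"
  assumes "bij_betw e {1..CARD('n)} UNIV" "perm_mat e g = perm_mat e g'"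
    "i \<in> {1..CARD('n)}" "g i \<in> {1..CARD('n)}"
  shows "g' i = g i"
  using perm_mat_entry[OF assms(1,3,4), of g] perm_mat_entry[OF assms(1,3,4), of g'] assms(2)
  by (auto split: if_splits)

lemma mod_affine_eq_imp_dvd:
  assumes "2 \<le> n" "\<forall>i\<in>{1..n}. mod_affine n u k i = mod_affine n u' k' i"
  shows "int n dvd (u - u')" "int n dvd (k - k')"
proof -
  have dvd_at: "int n dvd ((u - u') * int i + (k - k'))" if "i \<in> {1, 2}" for i
  proof -
    have i: "i \<in> {1..n}" and "0 < n" using that assms(1) by auto
    let ?j = "mod_affine n u k i"
    have j: "?j \<in> {1..n}" by (rule mod_affine_range[OF \<open>0 < n\<close> i])
    have "mod_affine n u' k' i = ?j" using assms(2) i by simp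
    then have "int n dvd (u * int i + k - int ?j)" "int n dvd (u' * int i + k' - int ?j)"
      using mod_affine_eq_iff[OF \<open>0 < n\<close> i j] by blast+
    then have "int n dvd ((u * int i + k - int ?j) - (u' * int i + k' - int ?j))"
      by (rule dvd_diff)
    then show ?thesis by (simp add: algebra_simps)
  qed
  have "int n dvd ((u - u') * int 2 + (k - k')) - ((u - u') * int 1 + (k - k'))"
    using dvd_at[of 1] dvd_at[of 2] by (intro dvd_diff) simp_all
  then show "int n dvd (u - u')" by (simp add: algebra_simps)
  then show "int n dvd (k - k')"
    using dvd_at[of 1] by (simp add: dvd_add_right_iff)
qed

lemma exists_index_mod:
  assumes "0 < n"
  obtains i where "i \<in> {1..n}" "int i mod int n = x mod int n"
proof
  let ?i = "nat ((x - 1) mod int n) + 1"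
  show "?i \<in> {1..n}"
    using assms pos_mod_bound[of "int n" "x - 1"] pos_mod_sign[of "int n" "x - 1"]
    by (auto simp: Suc_le_eq nat_less_iff)
  have "int ?i = (x - 1) mod int n + 1" using assms by simp
  then show "int ?i mod int n = x mod int n"
    by (metis mod_add_left_eq diff_add_cancel)
qed

locale dihedral_vertices =
  fixes e :: "nat \<Rightarrow> 'n::finite"
  assumes bij: "bij_betw e {1..CARD('n)} UNIV" and card_gt_2: "2 < CARD('n)"
begin

text \<open>\<open>vertex 1 k\<close> is the rotation \<open>r\<^sup>k\<close>, \<open>vertex (-1) m\<close> the reflection \<open>i \<mapsto> m - i\<close>.\<close>

definition vertex :: "int \<Rightarrow> int \<Rightarrow> real ^ 'n ^ 'n" where
  "vertex u k = perm_mat e (mod_affine CARD('n) u k)"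

lemma card_pos: "0 < CARD('n)"
  using card_gt_2 by simp

lemma vertex_entry:
  assumes "i \<in> {1..CARD('n)}" "j \<in> {1..CARD('n)}" "k \<in> {0..<int CARD('n)}"
  shows "vertex u k $ e i $ e j = of_bool ((int j - u * int i) mod int CARD('n) = k)"
proof -
  have "(int j - u * int i) mod int CARD('n) = k \<longleftrightarrow> (int j - u * int i) mod int CARD('n) = k mod int CARD('n)"
    using assms(3) by simp
  also have "\<dots> \<longleftrightarrow> int CARD('n) dvd (u * int i + k - int j)"
    by (simp add: mod_eq_dvd_iff dvd_diff_commute algebra_simps)
  finally show ?thesis
    unfolding vertex_def perm_mat_entry[OF bij assms(1,2)] mod_affine_eq_iff[OF card_pos assms(1,2)] by simp
qed

lemma vertex_inj: "inj_on (\<lambda>(u, k). vertex u k) ({1, -1} \<times> {0..<int CARD('n)})"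
proof (rule inj_onI, clarify)
  fix u k u' k'
  assume u: "u \<in> {1, -1}" "u' \<in> {1, -1}" and k: "k \<in> {0..<int CARD('n)}" "k' \<in> {0..<int CARD('n)}"
    and eq: "vertex u k = vertex u' k'"
  have "\<forall>i\<in>{1..CARD('n)}. mod_affine CARD('n) u k i = mod_affine CARD('n) u' k' i"
    using eq perm_mat_eq_imp_eq_on[OF bij] mod_affine_range[OF card_pos]
    unfolding vertex_def by metis
  then have "int CARD('n) dvd (u - u')" "int CARD('n) dvd (k - k')"
    using mod_affine_eq_imp_dvd card_gt_2 by simp_all
  moreover have "\<not> int CARD('n) dvd 2"
    using card_gt_2 by (auto dest!: zdvd_imp_le)
  ultimately have "u = u'"
    using u by (auto simp: dvd_diff_commute[of _ "-1"])
  moreover have "k = k'"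
    using k \<open>int CARD('n) dvd (k - k')\<close> by (auto simp: mod_eq_dvd_iff[symmetric])
  ultimately show "u = u' \<and> k = k'" ..
qed

lemma dn_vertices_eq: "dn_vertices e = (\<lambda>(u, k). vertex u k) ` ({1, -1} \<times> {0..<int CARD('n)})"
  unfolding dn_vertices_def dihedral_eq[OF card_pos] image_image vertex_def
  by (simp add: case_prod_beta)

lemma vertex_eq_iff:
  assumes "u \<in> {1, -1}" "u' \<in> {1, -1}" "k \<in> {0..<int CARD('n)}" "k' \<in> {0..<int CARD('n)}"
  shows "vertex u k = vertex u' k' \<longleftrightarrow> u = u' \<and> k = k'"
  using inj_onD[OF vertex_inj, of "(u, k)" "(u', k')"] assms by auto

lemma vertex_inj_on: "u \<in> {1, -1} \<Longrightarrow> X \<subseteq> {0..<int CARD('n)} \<Longrightarrow> inj_on (vertex u) X"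
  by (rule inj_onI) (auto simp: vertex_eq_iff subset_iff)

lemma sum_vertex_entry:
  assumes "i \<in> {1..CARD('n)}" "j \<in> {1..CARD('n)}" "X \<subseteq> {0..<int CARD('n)}"
  shows "(\<Sum>k\<in>X. f k * vertex u k $ e i $ e j)
    = (if (int j - u * int i) mod int CARD('n) \<in> X then f ((int j - u * int i) mod int CARD('n)) else 0)"
proof -
  have "finite X" using assms(3) finite_subset by blast
  have "(\<Sum>k\<in>X. f k * vertex u k $ e i $ e j)
    = (\<Sum>k\<in>X. if (int j - u * int i) mod int CARD('n) = k then f k else 0)"
    using assms by (intro sum.cong) (auto simp: vertex_entry)
  then show ?thesis using \<open>finite X\<close> by (simp add: sum.delta)
qed

lemma class_sum_entry:
  assumes "u \<in> {1, -1}" "i \<in> {1..CARD('n)}" "j \<in> {1..CARD('n)}" "X \<subseteq> {0..<int CARD('n)}"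
  shows "(\<Sum>(vertex u ` X)) $ e i $ e j = of_bool ((int j - u * int i) mod int CARD('n) \<in> X)"
  using sum_vertex_entry[OF assms(2-4), of "\<lambda>_. 1"]
  by (simp add: sum.reindex[OF vertex_inj_on[OF assms(1,4)]])

lemma relation_entry:
  assumes "i \<in> {1..CARD('n)}" "j \<in> {1..CARD('n)}"
  shows "(\<Sum>v\<in>dn_vertices e. c v *\<^sub>R v) $ e i $ e j
    = c (vertex 1 ((int j - int i) mod int CARD('n))) + c (vertex (-1) ((int j + int i) mod int CARD('n)))"
proof -
  let ?K = "{0..<int CARD('n)}"
  have "(\<Sum>v\<in>dn_vertices e. c v *\<^sub>R v) $ e i $ e j = (\<Sum>u\<in>{1, -1}. \<Sum>k\<in>?K. c (vertex u k) * vertex u k $ e i $ e j)"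
    unfolding dn_vertices_eq sum.reindex[OF vertex_inj] sum.cartesian_product by (simp add: case_prod_beta)
  also have "\<dots> = (\<Sum>u\<in>{1, -1}. c (vertex u ((int j - u * int i) mod int CARD('n))))"
    using sum_vertex_entry[OF assms order_refl] card_pos by simp
  finally show ?thesis by simp
qed

lemma matrix_eqI:
  assumes "\<And>i j. i \<in> {1..CARD('n)} \<Longrightarrow> j \<in> {1..CARD('n)} \<Longrightarrow> M $ e i $ e j = M' $ e i $ e j"
  shows "M = M'"
proof -
  have "\<forall>a. \<exists>i\<in>{1..CARD('n)}. a = e i"
    using bij_betw_imp_surj_on[OF bij] by (metis UNIV_I imageE)
  then show ?thesis using assms unfolding vec_eq_iff by metis
qed

text \<open>
  \<open>vertex 1 k\<close> and \<open>vertex (-1) m\<close> are in the same pair of classes iff \<open>k \<equiv> m\<close> modulo \<open>period\<close>.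
\<close>

definition period :: int where
  "period = gcd 2 (int CARD('n))"

definition shift_class :: "int \<Rightarrow> int set" where
  "shift_class s = {k \<in> {0..<int CARD('n)}. k mod period = s}"

lemma period_pos: "0 < period" and period_dvd_2: "period dvd 2"
  and period_dvd_card: "period dvd int CARD('n)"
  unfolding period_def by simp_all

lemma solve_double_mod:
  assumes "period dvd d"
  obtains t where "int CARD('n) dvd (2 * t - d)"
proof -
  obtain a b where ab: "a * 2 + b * int CARD('n) = period"
    using bezout_int unfolding period_def by blast
  obtain q where "d = period * q" using assms by blast
  then have "2 * (a * q) - d = int CARD('n) * (- b * q)"
    by (simp flip: ab add: algebra_simps)
  then show ?thesis using that[of "a * q"] by (metis dvd_triv_left)
qed

lemma mod_mem_shift_class: "x mod int CARD('n) \<in> shift_class s \<longleftrightarrow> x mod period = s"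
  using card_pos mod_mod_cancel[OF period_dvd_card] unfolding shift_class_def by simp

lemma class_sums_eq: "\<Sum>(vertex 1 ` shift_class s) = \<Sum>(vertex (-1) ` shift_class s)"
proof (rule matrix_eqI)
  fix i j assume ij: "i \<in> {1..CARD('n)}" "j \<in> {1..CARD('n)}"
  have "(int j - int i) mod period = (int j + int i) mod period"
    using period_dvd_2 dvd_trans[OF period_dvd_2, of "2 * int i"]
    by (simp add: mod_eq_dvd_iff algebra_simps)
  moreover have sub: "shift_class s \<subseteq> {0..<int CARD('n)}" by (auto simp: shift_class_def)
  ultimately show "\<Sum>(vertex 1 ` shift_class s) $ e i $ e j = \<Sum>(vertex (-1) ` shift_class s) $ e i $ e j"
    using class_sum_entry[of 1, OF _ ij sub] class_sum_entry[of "-1", OF _ ij sub]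
    by (simp add: mod_mem_shift_class)
qed

lemma shift_class_relation:
  assumes rel: "(\<Sum>v\<in>dn_vertices e. c v *\<^sub>R v) = 0"
    and k: "k \<in> shift_class s" and m: "m \<in> shift_class s"
  shows "c (vertex (-1) m) = - c (vertex 1 k)"
proof -
  let ?n = "int CARD('n)"
  have "period dvd (m - k)"
    using k m mod_eq_dvd_iff[of m period k] unfolding shift_class_def by simp
  then obtain t where t: "?n dvd (2 * t - (m - k))" by (rule solve_double_mod)
  obtain i where i: "i \<in> {1..CARD('n)}" "int i mod ?n = t mod ?n"
    using exists_index_mod[OF card_pos] .
  obtain j where j: "j \<in> {1..CARD('n)}" "int j mod ?n = (t + k) mod ?n"
    using exists_index_mod[OF card_pos] .
  have "(int j - int i) mod ?n = k mod ?n"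
    using mod_diff_cong[OF j(2) i(2)] by simp
  then have jk: "(int j - int i) mod ?n = k"
    using k unfolding shift_class_def by simp
  have "(int j + int i) mod ?n = (2 * t + k) mod ?n"
    using mod_add_cong[OF j(2) i(2)] by (simp add: algebra_simps)
  also have "\<dots> = m mod ?n"
    using t by (simp add: mod_eq_dvd_iff algebra_simps)
  finally have jm: "(int j + int i) mod ?n = m"
    using m unfolding shift_class_def by simp
  show ?thesis
    using relation_entry[OF i(1) j(1), of c] rel unfolding jk jm by simp
qed

lemma shift_class_subset: "shift_class s \<subseteq> {0..<int CARD('n)}"
  unfolding shift_class_def by blast

lemma mem_own_shift_class: "s \<in> {0..<period} \<Longrightarrow> s \<in> shift_class s"
  using zdvd_imp_le[OF period_dvd_2] card_gt_2 unfolding shift_class_def by auto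

lemma dn_vertices_eq_Union:
  "dn_vertices e = (\<Union>s\<in>{0..<period}. vertex 1 ` shift_class s \<union> vertex (-1) ` shift_class s)"
proof
  show "dn_vertices e \<subseteq> (\<Union>s\<in>{0..<period}. vertex 1 ` shift_class s \<union> vertex (-1) ` shift_class s)"
  proof
    fix v assume "v \<in> dn_vertices e"
    then have "\<exists>u\<in>{1, -1}. \<exists>k\<in>{0..<int CARD('n)}. v = vertex u k"
      unfolding dn_vertices_eq by auto
    then obtain u k where "u \<in> {1, -1}" "k \<in> {0..<int CARD('n)}" "v = vertex u k"
      by blast
    moreover have "k \<in> shift_class (k mod period)" "k mod period \<in> {0..<period}"
      using \<open>k \<in> {0..<int CARD('n)}\<close> period_pos unfolding shift_class_def by auto
    ultimately show "v \<in> (\<Union>s\<in>{0..<period}. vertex 1 ` shift_class s \<union> vertex (-1) ` shift_class s)"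
      by blast
  qed
  show "(\<Union>s\<in>{0..<period}. vertex 1 ` shift_class s \<union> vertex (-1) ` shift_class s) \<subseteq> dn_vertices e"
    unfolding dn_vertices_eq using shift_class_subset by force
qed

lemma dn_vertices_balanced:
  "balanced_partition (dn_vertices e) {0..<period}
    (\<lambda>s. vertex 1 ` shift_class s) (\<lambda>s. vertex (-1) ` shift_class s)"
proof
  have distinct: "vertex u k \<noteq> vertex u' k'"
    if "u \<in> {1, -1}" "u' \<in> {1, -1}" "k \<in> shift_class s" "k' \<in> shift_class s'" "u \<noteq> u' \<or> s \<noteq> s'"
    for u u' k k' s s'
    using that vertex_eq_iff[of u u' k k'] unfolding shift_class_def by auto
  show "vertex 1 ` shift_class s \<inter> vertex (-1) ` shift_class s' = {}" for s s'
    using distinct[of 1 "-1" _ s _ s'] by force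
  show "vertex 1 ` shift_class s \<inter> vertex 1 ` shift_class s' = {}" if "s \<noteq> s'" for s s'
    using distinct[of 1 1 _ s _ s'] that by blast
  show "vertex (-1) ` shift_class s \<inter> vertex (-1) ` shift_class s' = {}" if "s \<noteq> s'" for s s'
    using distinct[of "-1" "-1" _ s _ s'] that by blast
  show "card (vertex 1 ` shift_class s) = card (vertex (-1) ` shift_class s)" for s
    using card_image[OF vertex_inj_on[OF _ shift_class_subset]] by simp
  show "c b = - c a"
    if "(\<Sum>v\<in>dn_vertices e. c v *\<^sub>R v) = 0" "a \<in> vertex 1 ` shift_class s" "b \<in> vertex (-1) ` shift_class s"
    for c s a b
    using that shift_class_relation by blast
  show "finite (dn_vertices e)" by (simp add: dn_vertices_eq)
  show "finite {0..<period}" "{0..<period} \<noteq> {}" using period_pos by simp_all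
  show "vertex 1 ` shift_class s \<noteq> {}" if "s \<in> {0..<period}" for s
    using mem_own_shift_class[OF that] by blast
qed (rule dn_vertices_eq_Union class_sums_eq)+
end

theorem proposition3:
  fixes e :: "nat \<Rightarrow> 'n::finite"
  assumes "bij_betw e {1..CARD('n)} (UNIV :: 'n set)"
    and "CARD('n) > 2"
  shows "\<exists>T. regular_triangulation (dn_vertices e) T \<and>
             (\<forall>S\<in>T. unimodular_in (aff_lattice (dn_vertices e)) S)"
proof -
  interpret dihedral_vertices e using assms by unfold_locales
  show ?thesis by (rule balanced_partition.regular_unimodular_triangulation[OF dn_vertices_balanced])
qed

end
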